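(* Let $\Bbbk$ be a field and $q\in\Bbbk$ with $[m]_q:=1+q+\cdots+q^{m-1}\ne0$ for all $m\ge1$; put $[k]_q!=[1]_q\cdots[k]_q$. Let $f(t)=\sum_{k\ge0}\frac{t^k}{[k]_q!}$, so $a_k=1/[k]_q!$. Then for all $k\ge1$, $$P_{f,k}(t)=\frac{(t-1)(t-q)\cdots(t-q^{k-1})}{[k]_q!},$$ where $P_{f,k}(t)=(-1)^k\det\begin{pmatrix} 1&a_1t&\ldots &a_kt^k\\ 1&a_1&\ldots &a_k\\ 0&1&\ldots &a_{k-1}\\ \vdots&\ddots&\ddots&\vdots\\ 0&\ldots &1&a_1 \end{pmatrix}$.
   Context: The determinant is $(k+1)\times(k+1)$: first row $(1,a_1t,\dots,a_kt^k)$, second row $(1,a_1,\dots,a_k)$, row $r\ge3$ has zeros in its first $r-2$ entries, $1$ in entry $r-1$, then $a_1,a_2,\dots$. *)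

theory Defs
  imports "HOL-Computational_Algebra.Polynomial" "Jordan_Normal_Form.Determinant"
begin

definition q_int :: "'a::comm_ring_1 \<Rightarrow> nat \<Rightarrow> 'a" where
  "q_int q m = (\<Sum>i<m. q ^ i)"

definition q_fact :: "'a::comm_ring_1 \<Rightarrow> nat \<Rightarrow> 'a" where
  "q_fact q k = (\<Prod>m\<in>{1..k}. q_int q m)"

text \<open>The (k+1)x(k+1) matrix (0-indexed rows/columns) with polynomial entries:
  row 0 is (1, a_1 t, ..., a_k t^k); row i >= 1 has entry a_(j+1-i) in column j
  when j+1 >= i and 0 otherwise (with a_0 = 1 in position (i, i-1)).\<close>
definition P_matrix :: "(nat \<Rightarrow> 'a::comm_ring_1) \<Rightarrow> nat \<Rightarrow> 'a poly mat" where
  "P_matrix a k = mat (k+1) (k+1) (\<lambda>(i,j).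
     if i = 0 then (if j = 0 then 1 else monom (a j) j)
     else if i \<le> j + 1 then (if j + 1 = i then 1 else [:a (j + 1 - i):])
     else 0)"

definition P_poly :: "(nat \<Rightarrow> 'a::comm_ring_1) \<Rightarrow> nat \<Rightarrow> 'a poly" where
  "P_poly a k = (-1) ^ k * det (P_matrix a k)"

end

theory Submission
  imports Defs
begin

text \<open>Let \<open>g\<close> be the inverse power series of \<open>\<Sum>n. a n t\<^sup>n\<close> (with \<open>a 0 = 1\<close>), i.e.
  \<open>\<Sum>n\<le>N. a n * g (N - n) = 0\<close> for \<open>N \<ge> 1\<close>. Adding \<open>g (k - l)\<close> times column \<open>l\<close> to the last
  column of the matrix clears that column except for its top entry \<open>\<Sum>l\<le>k. a l * g (k - l) * t\<^sup>l\<close>,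
  and the complementary minor is unitriangular, so \<open>P\<^sub>f\<^sub>,\<^sub>k\<close> is exactly this polynomial.
  For the q-exponential, \<open>g n = (-1)\<^sup>n q\<^bsup>n(n-1)/2\<^esup> / [n]!\<close>, and the polynomial equals
  \<open>(t - 1) \<cdots> (t - q\<^bsup>k-1\<^esup>) / [k]!\<close> (Cauchy's q-binomial theorem), which follows from the
  recurrence \<open>[k+1] Q\<^sub>k\<^sub>+\<^sub>1 = (t - q\<^sup>k) Q\<^sub>k\<close> on coefficients. Evaluating at \<open>t = 1\<close> shows in
  turn that this \<open>g\<close> is indeed the inverse series.\<close>

lemma q_fact_0 [simp]: "q_fact q 0 = 1"
  by (simp add: q_fact_def)

lemma q_fact_Suc: "q_fact q (Suc n) = q_fact q n * q_int q (Suc n)"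
  by (simp add: q_fact_def prod.cl_ivl_Suc mult.commute)

lemma q_int_add: "q_int q (m + n) = q_int q m + q ^ m * q_int q n"
  by (induction n) (simp_all add: q_int_def algebra_simps power_add)

lemma q_fact_nonzero:
  fixes q :: "'a::field"
  assumes "\<And>m. m \<ge> 1 \<Longrightarrow> q_int q m \<noteq> 0"
  shows "q_fact q n \<noteq> 0"
  using assms by (induction n) (auto simp: q_fact_Suc)

definition q_exp_inv :: "'a::field \<Rightarrow> nat \<Rightarrow> 'a" where
  "q_exp_inv q m = (-1) ^ m * q ^ (m choose 2) / q_fact q m"

lemma q_exp_inv_0 [simp]: "q_exp_inv q 0 = 1"
  by (simp add: q_exp_inv_def numeral_2_eq_2)

lemma q_exp_inv_Suc: "q_exp_inv q (Suc m) = - (q ^ m) * q_exp_inv q m / q_int q (Suc m)"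
proof -
  have "Suc m choose 2 = m + (m choose 2)"
    by (simp add: numeral_2_eq_2)
  then show ?thesis
    by (simp add: q_exp_inv_def q_fact_Suc power_add)
qed

definition q_binomial_poly :: "'a::field \<Rightarrow> nat \<Rightarrow> 'a poly" where
  "q_binomial_poly q k = (\<Sum>j\<le>k. monom (1 / q_fact q j * q_exp_inv q (k - j)) j)"

lemma coeff_q_binomial_poly:
  "coeff (q_binomial_poly q k) j = (if j \<le> k then 1 / q_fact q j * q_exp_inv q (k - j) else 0)"
  by (simp add: q_binomial_poly_def coeff_sum)

lemma q_binomial_poly_coeff_Suc:
  fixes q :: "'a::field"
  assumes nz: "\<And>m. m \<ge> 1 \<Longrightarrow> q_int q m \<noteq> 0"
  shows "q_int q (Suc k) * coeff (q_binomial_poly q (Suc k)) j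
    = (if j = 0 then 0 else coeff (q_binomial_poly q k) (j - 1)) - q ^ k * coeff (q_binomial_poly q k) j"
proof (cases j)
  case 0
  then show ?thesis
    using nz[of "Suc k"] by (simp add: coeff_q_binomial_poly q_exp_inv_Suc)
next
  case (Suc s)
  consider "k < s" | "s = k" | m where "k = Suc s + m"
    using less_imp_Suc_add by (cases "s < k") fastforce+
  then show ?thesis
  proof cases
    case 1
    then show ?thesis using Suc by (simp add: coeff_q_binomial_poly)
  next
    case 2
    then show ?thesis
      using Suc nz[of "Suc k"] q_fact_nonzero[OF nz, of k] by (simp add: coeff_q_binomial_poly q_fact_Suc)
  next
    case 3
    have "Suc k - Suc s = Suc m" "k - s = Suc m" "k - Suc s = m"
      using 3 by simp_all
    then have coeffs:
      "coeff (q_binomial_poly q (Suc k)) j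
         = 1 / q_fact q s / q_int q (Suc s) * (- (q ^ m) * q_exp_inv q m / q_int q (Suc m))"
      "coeff (q_binomial_poly q k) (j - 1) = 1 / q_fact q s * (- (q ^ m) * q_exp_inv q m / q_int q (Suc m))"
      "coeff (q_binomial_poly q k) j = 1 / q_fact q s / q_int q (Suc s) * q_exp_inv q m"
      using Suc 3 by (simp_all add: coeff_q_binomial_poly q_fact_Suc q_exp_inv_Suc)
    have "q_int q (Suc k) = q_int q (Suc s) + q ^ Suc s * q_int q (Suc m)"
      using q_int_add[of q "Suc s" "Suc m"] 3 by simp
    moreover have "q ^ k = q ^ Suc s * q ^ m"
      using 3 by (simp add: power_add)
    ultimately show ?thesis
      unfolding coeffs using Suc nz[of "Suc s"] nz[of "Suc m"] q_fact_nonzero[OF nz, of s]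
      by (simp add: field_simps)
  qed
qed

lemma q_binomial_poly_Suc:
  fixes q :: "'a::field"
  assumes "\<And>m. m \<ge> 1 \<Longrightarrow> q_int q m \<noteq> 0"
  shows "smult (q_int q (Suc k)) (q_binomial_poly q (Suc k)) = [:- (q ^ k), 1:] * q_binomial_poly q k"
proof (rule poly_eqI)
  fix j
  have "[:- (q ^ k), 1:] * q_binomial_poly q k = pCons 0 (q_binomial_poly q k) - smult (q ^ k) (q_binomial_poly q k)"
    by (simp add: algebra_simps)
  then show "coeff (smult (q_int q (Suc k)) (q_binomial_poly q (Suc k))) j = coeff ([:- (q ^ k), 1:] * q_binomial_poly q k) j"
    using q_binomial_poly_coeff_Suc[OF assms, of k j] by (cases j) simp_all
qed

lemma q_binomial_poly_eq_prod:
  fixes q :: "'a::field"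
  assumes nz: "\<And>m. m \<ge> 1 \<Longrightarrow> q_int q m \<noteq> 0"
  shows "q_binomial_poly q k = smult (1 / q_fact q k) (\<Prod>i<k. [:- (q ^ i), 1:])"
proof (induction k)
  case 0
  then show ?case by (simp add: q_binomial_poly_def monom_0 one_pCons)
next
  case (Suc k)
  have "q_binomial_poly q (Suc k)
      = smult (1 / q_int q (Suc k)) (smult (q_int q (Suc k)) (q_binomial_poly q (Suc k)))"
    using nz[of "Suc k"] by simp
  also have "\<dots> = smult (1 / q_int q (Suc k)) ([:- (q ^ k), 1:] * q_binomial_poly q k)"
    by (simp only: q_binomial_poly_Suc[OF nz])
  finally show ?case
    using Suc by (simp add: q_fact_Suc mult.commute mult.left_commute)
qed

lemma q_exp_inv_convolution:
  fixes q :: "'a::field"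
  assumes nz: "\<And>m. m \<ge> 1 \<Longrightarrow> q_int q m \<noteq> 0" and "N \<ge> 1"
  shows "(\<Sum>n\<le>N. 1 / q_fact q n * q_exp_inv q (N - n)) = 0"
proof -
  have "(\<Sum>n\<le>N. 1 / q_fact q n * q_exp_inv q (N - n)) = poly (q_binomial_poly q N) 1"
    by (simp add: q_binomial_poly_def poly_sum poly_monom)
  also have "\<dots> = 0"
    using \<open>N \<ge> 1\<close> by (auto simp: q_binomial_poly_eq_prod[OF nz] poly_prod prod_zero_iff intro: bexI[of _ 0])
  finally show ?thesis .
qed

lemma det_unit_upper_triangular:
  assumes "A \<in> carrier_mat n n" "upper_triangular A" "\<And>i. i < n \<Longrightarrow> A $$ (i, i) = 1"
  shows "det A = 1"
proof -
  have "diag_mat A = map (\<lambda>_. 1) [0..<n]"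
    using assms(1,3) by (auto simp: diag_mat_def)
  then show ?thesis
    using det_upper_triangular[OF assms(2,1)] by (simp add: map_replicate_const)
qed

lemma P_matrix_index:
  assumes "a 0 = 1" "i < k + 1" "j < k + 1"
  shows "P_matrix a k $$ (i, j) =
    (if i = 0 then monom (a j) j else if i \<le> j + 1 then [:a (j + 1 - i):] else 0)"
  using assms by (auto simp: P_matrix_def monom_0 one_pCons)

definition inverse_series_column_mat :: "(nat \<Rightarrow> 'a::comm_ring_1) \<Rightarrow> nat \<Rightarrow> 'a poly mat" where
  "inverse_series_column_mat g k =
     mat (k+1) (k+1) (\<lambda>(i, j). if j = k then [:g (k - i):] else if i = j then 1 else 0)"

lemma det_inverse_series_column_mat:
  assumes "g 0 = 1"
  shows "det (inverse_series_column_mat g k) = 1"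
  using assms
  by (intro det_unit_upper_triangular[of _ "k+1"])
     (auto simp: inverse_series_column_mat_def upper_triangular_def)

lemma P_matrix_row_times_inverse_series:
  assumes a0: "a 0 = 1" and inv: "\<And>N. N \<ge> 1 \<Longrightarrow> (\<Sum>n\<le>N. a n * g (N - n)) = 0"
    and "i < k + 1"
  shows "(\<Sum>l<k+1. P_matrix a k $$ (i, l) * [:g (k - l):])
    = (if i = 0 then (\<Sum>l\<le>k. monom (a l * g (k - l)) l) else 0)"
proof (cases i)
  case 0
  then show ?thesis
    using a0 by (simp add: P_matrix_index lessThan_Suc_atMost mult_monom flip: monom_0)
next
  case (Suc i')
  have "(\<Sum>l<k+1. P_matrix a k $$ (i, l) * [:g (k - l):])
      = (\<Sum>l<k+1. [:if i' \<le> l then a (l - i') * g (k - l) else 0:])"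
    using Suc a0 \<open>i < k + 1\<close> by (intro sum.cong) (auto simp: P_matrix_index)
  also have "\<dots> = [:\<Sum>l\<in>{i'..<k+1}. a (l - i') * g (k - l):]"
    unfolding sum_to_poly by (intro arg_cong[where f = "\<lambda>x. [:x:]"] sum.mono_neutral_cong_right) auto
  also have "(\<Sum>l\<in>{i'..<k+1}. a (l - i') * g (k - l)) = (\<Sum>n\<le>k - i'. a n * g (k - i' - n))"
    using sum.shift_bounds_nat_ivl[of "\<lambda>l. a (l - i') * g (k - l)" 0 i' "k + 1 - i'"] \<open>i < k + 1\<close> Suc
    by (simp add: atLeast0LessThan lessThan_Suc_atMost Suc_diff_le add.commute)
  also have "\<dots> = 0"
    using inv[of "k - i'"] Suc \<open>i < k + 1\<close> by simp
  finally show ?thesis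
    using Suc by simp
qed

lemma P_matrix_mult_inverse_series_column_mat:
  assumes a0: "a 0 = 1" and inv: "\<And>N. N \<ge> 1 \<Longrightarrow> (\<Sum>n\<le>N. a n * g (N - n)) = 0"
  shows "P_matrix a k * inverse_series_column_mat g k = mat (k+1) (k+1) (\<lambda>(i, j).
    if j = k then (if i = 0 then (\<Sum>l\<le>k. monom (a l * g (k - l)) l) else 0) else P_matrix a k $$ (i, j))"
    (is "?M * ?C = ?N")
proof (rule eq_matI)
  fix i j
  assume "i < dim_row ?N" "j < dim_col ?N"
  then have ij: "i < k + 1" "j < k + 1"
    by simp_all
  have "(?M * ?C) $$ (i, j) = (\<Sum>l<k+1. ?M $$ (i, l) * ?C $$ (l, j))"
    using ij by (simp add: P_matrix_def inverse_series_column_mat_def scalar_prod_def atLeast0LessThan)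
  also have "\<dots> = ?N $$ (i, j)"
  proof (cases "j = k")
    case True
    then show ?thesis
      using P_matrix_row_times_inverse_series[OF a0 inv \<open>i < k + 1\<close>] ij
      by (simp add: inverse_series_column_mat_def)
  next
    case False
    then have "(\<Sum>l<k+1. ?M $$ (i, l) * ?C $$ (l, j)) = (\<Sum>l<k+1. if l = j then ?M $$ (i, l) else 0)"
      using ij by (intro sum.cong) (auto simp: inverse_series_column_mat_def)
    then show ?thesis
      using False ij by simp
  qed
  finally show "(?M * ?C) $$ (i, j) = ?N $$ (i, j)" .
qed (simp_all add: P_matrix_def inverse_series_column_mat_def)

lemma det_P_matrix:
  assumes a0: "a 0 = 1" and inv: "\<And>N. N \<ge> 1 \<Longrightarrow> (\<Sum>n\<le>N. a n * g (N - n)) = 0"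
    and g0: "g 0 = 1"
  shows "det (P_matrix a k) = (-1) ^ k * (\<Sum>l\<le>k. monom (a l * g (k - l)) l)"
proof -
  let ?Q = "\<Sum>l\<le>k. monom (a l * g (k - l)) l"
  let ?M = "P_matrix a k"
  let ?N = "?M * inverse_series_column_mat g k"
  have M: "?M \<in> carrier_mat (k+1) (k+1)" and C: "inverse_series_column_mat g k \<in> carrier_mat (k+1) (k+1)"
    by (simp_all add: P_matrix_def inverse_series_column_mat_def)
  have N: "?N \<in> carrier_mat (k+1) (k+1)"
    using M C by simp
  have minor: "mat_delete ?N 0 k $$ (i, j) = ?M $$ (Suc i, j)" if "i < k" "j < k" for i j
    using that by (simp add: P_matrix_mult_inverse_series_column_mat[OF a0 inv] mat_delete_def)
  have "det (mat_delete ?N 0 k) = 1"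
    using a0 M mat_delete_carrier[OF N]
    by (intro det_unit_upper_triangular[of _ k]) (auto simp: upper_triangular_def minor P_matrix_index carrier_matD)
  have last_column: "?N $$ (i, k) = (if i = 0 then ?Q else 0)" if "i < k + 1" for i
    using that by (simp add: P_matrix_mult_inverse_series_column_mat[OF a0 inv])
  have "det ?N = (\<Sum>i<k+1. ?N $$ (i, k) * cofactor ?N i k)"
    using laplace_expansion_column[OF N, of k] by simp
  also have "\<dots> = (\<Sum>i<k+1. if i = 0 then ?Q * cofactor ?N 0 k else 0)"
    by (intro sum.cong) (simp_all add: last_column)
  also have "\<dots> = ?Q * cofactor ?N 0 k"
    by (simp only: sum.delta finite_lessThan) simp
  also have "\<dots> = (-1) ^ k * ?Q"
    using \<open>det (mat_delete ?N 0 k) = 1\<close> by (simp add: cofactor_def)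
  finally have "det ?N = (-1) ^ k * ?Q" .
  then show ?thesis
    using det_mult[OF M C] det_inverse_series_column_mat[of g k, OF g0] by simp
qed

lemma P_poly_eq_inverse_series_convolution:
  assumes "a 0 = 1" and "\<And>N. N \<ge> 1 \<Longrightarrow> (\<Sum>n\<le>N. a n * g (N - n)) = 0" and "g 0 = 1"
  shows "P_poly a k = (\<Sum>l\<le>k. monom (a l * g (k - l)) l)"
proof -
  have "((-1) ^ k * (-1) ^ k :: 'a poly) = 1"
    by (simp flip: power_add)
  then show ?thesis
    by (simp add: P_poly_def det_P_matrix[OF assms] mult.assoc[symmetric])
qed

theorem proposition2p4:
  fixes q :: "'a::field" and k :: nat
  assumes "\<And>m. m \<ge> 1 \<Longrightarrow> q_int q m \<noteq> 0"
    and "k \<ge> 1"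
  shows "P_poly (\<lambda>n. 1 / q_fact q n) k
         = smult (1 / q_fact q k) (\<Prod>i<k. [:- (q ^ i), 1:])"
proof -
  have "P_poly (\<lambda>n. 1 / q_fact q n) k = q_binomial_poly q k"
    unfolding q_binomial_poly_def
    by (rule P_poly_eq_inverse_series_convolution) (use q_exp_inv_convolution[OF assms(1)] in simp_all)
  then show ?thesis
    by (simp add: q_binomial_poly_eq_prod[OF assms(1)])
qed

end
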